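(* Assume Assumption (A) and the standing DDE setting. Let $U\subseteq\mathbb{C}\times\mathbb{R}$ be compact. Then there exists $C>0$ such that for all $n$ large enough and all $(\lambda,\alpha)\in U$, $\Delta_n(\lambda,\alpha)$ is defined and $$|\Delta_0(\lambda,\alpha)-\Delta_n(\lambda,\alpha)|<\frac1{\sqrt n}\Big(\frac Cn\Big)^n .$$
   Context: Notation. $X=C([-1,0],\mathbb{R})$ with the supremum norm; linear maps on $X$ are extended complex-linearly to $C([-1,0],\mathbb{C})$. For $\lambda\in\mathbb{C}$, $\varepsilon_\lambda(\theta)=e^{\lambda\theta}$, $\theta\in[-1,0]$. For each $n\in\mathbb{N}$ a mesh $-1\le\theta_n<\dots<\theta_1<\theta_0=0$ is given (the nodes may depend on $n$), with Lagrange polynomials $\ell_j(\theta)=\prod_{0\le m\le n,\,m\neq j}\frac{\theta-\theta_m}{\theta_j-\theta_m}$, $j=0,\dots,n$. $D$ is the $n\times n$ matrix with entries $D_{ij}=\ell_j'(\theta_i)$, $i,j=1,\dots,n$; $\mathbf 1=(1,\dots,1)^T\in\mathbb{R}^n$; $I$ is the identity matrix. For $y\in\mathbb{C}^n$, $Py=\sum_{j=1}^n y_j\ell_j$. For $\lambda\in\mathbb{C}$ with $D-\lambda I$ invertible, $\pi_n(\lambda):=\ell_0+P(D-\lambda I)^{-1}D\mathbf 1$. Assumption (A): with the reduced Lagrange polynomials $\tilde\ell_j(\theta)=\prod_{1\le m\le n,\,m\neq j}\frac{\theta-\theta_m}{\theta_j-\theta_m}$, $j=1,\dots,n$, the Lebesgue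 constants $\tilde\Lambda_n=\max_{\theta\in[-1,0]}\sum_{j=1}^n|\tilde\ell_j(\theta)|$ satisfy $\tilde\Lambda_n/n\to0$ as $n\to\infty$. Standing DDE setting (linear part): for $\alpha\in\mathbb{R}$, $L(\alpha):X\to\mathbb{R}$ is bounded linear and $\alpha\mapsto L(\alpha)$ is $C^k$, $k\ge3$. $\Delta_0(\lambda,\alpha)=\lambda-L(\alpha)\varepsilon_\lambda$ and $\Delta_n(\lambda,\alpha)=\lambda-L(\alpha)\pi_n(\lambda)$ (defined when $D-\lambda I$ is invertible). *)

theory Defs
  imports "HOL-Analysis.Analysis"
begin

text \<open>Elements of X are represented by functions real => real continuous on [-1,0];
 values outside [-1,0] are irrelevant (functionals are required to ignore them).\<close>

definition Xspace :: "(real \<Rightarrow> real) set" where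
  "Xspace = {f. continuous_on {-1..0} f}"

definition supnorm :: "(real \<Rightarrow> real) \<Rightarrow> real" where
  "supnorm f = (SUP t\<in>{-1..0}. \<bar>f t\<bar>)"

definition bl_functional :: "((real \<Rightarrow> real) \<Rightarrow> real) \<Rightarrow> bool" where
  "bl_functional \<Phi> \<longleftrightarrow>
     (\<forall>f\<in>Xspace. \<forall>g\<in>Xspace. \<Phi> (\<lambda>t. f t + g t) = \<Phi> f + \<Phi> g) \<and>
     (\<forall>c. \<forall>f\<in>Xspace. \<Phi> (\<lambda>t. c * f t) = c * \<Phi> f) \<and>
     (\<forall>f\<in>Xspace. \<forall>g\<in>Xspace. (\<forall>t\<in>{-1..0}. f t = g t) \<longrightarrow> \<Phi> f = \<Phi> g) \<and>
     (\<exists>M. \<forall>f\<in>Xspace. \<bar>\<Phi> f\<bar> \<le> M * supnorm f)"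

definition fnorm :: "((real \<Rightarrow> real) \<Rightarrow> real) \<Rightarrow> real" where
  "fnorm \<Phi> = (SUP f\<in>{f\<in>Xspace. supnorm f \<le> 1}. \<bar>\<Phi> f\<bar>)"

text \<open>alpha |-> L(alpha) is C^k as a map into the Banach space of bounded linear
 functionals (operator norm): there are Ls 0 = L, Ls 1, ..., Ls k, all bounded linear,
 Ls (j+1) is the (Frechet) derivative of Ls j, and Ls k is continuous.\<close>
definition Ck_family :: "nat \<Rightarrow> (real \<Rightarrow> (real \<Rightarrow> real) \<Rightarrow> real) \<Rightarrow> bool" where
  "Ck_family k L \<longleftrightarrow>
     (\<exists>Ls :: nat \<Rightarrow> real \<Rightarrow> (real \<Rightarrow> real) \<Rightarrow> real.
        Ls 0 = L \<and>
        (\<forall>j\<le>k. \<forall>\<alpha>. bl_functional (Ls j \<alpha>)) \<and>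
        (\<forall>j<k. \<forall>\<alpha>. ((\<lambda>\<beta>. fnorm (\<lambda>f. Ls j \<beta> f - Ls j \<alpha> f - (\<beta> - \<alpha>) * Ls (Suc j) \<alpha> f)
                              / \<bar>\<beta> - \<alpha>\<bar>) \<longlongrightarrow> 0) (at \<alpha>)) \<and>
        (\<forall>\<alpha>. ((\<lambda>\<beta>. fnorm (\<lambda>f. Ls k \<beta> f - Ls k \<alpha> f)) \<longlongrightarrow> 0) (at \<alpha>)))"

definition cext :: "((real \<Rightarrow> real) \<Rightarrow> real) \<Rightarrow> (real \<Rightarrow> complex) \<Rightarrow> complex" where
  "cext \<Phi> f = complex_of_real (\<Phi> (\<lambda>t. Re (f t))) + \<i> * complex_of_real (\<Phi> (\<lambda>t. Im (f t)))"

definition expf :: "complex \<Rightarrow> real \<Rightarrow> complex" where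
  "expf z t = exp (z * complex_of_real t)"

text \<open>th n j = theta_j of the n-th mesh, j = 0..n.\<close>
definition is_mesh :: "(nat \<Rightarrow> real) \<Rightarrow> nat \<Rightarrow> bool" where
  "is_mesh th n \<longleftrightarrow> th 0 = 0 \<and> -1 \<le> th n \<and> (\<forall>j<n. th (Suc j) < th j)"

definition lagr :: "(nat \<Rightarrow> nat \<Rightarrow> real) \<Rightarrow> nat \<Rightarrow> nat \<Rightarrow> real \<Rightarrow> real" where
  "lagr th n j t = (\<Prod>m\<in>{0..n} - {j}. (t - th n m) / (th n j - th n m))"

definition lagr_red :: "(nat \<Rightarrow> nat \<Rightarrow> real) \<Rightarrow> nat \<Rightarrow> nat \<Rightarrow> real \<Rightarrow> real" where
  "lagr_red th n j t = (\<Prod>m\<in>{1..n} - {j}. (t - th n m) / (th n j - th n m))"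

definition lebesgue_red :: "(nat \<Rightarrow> nat \<Rightarrow> real) \<Rightarrow> nat \<Rightarrow> real" where
  "lebesgue_red th n = (SUP t\<in>{-1..0}. \<Sum>j=1..n. \<bar>lagr_red th n j t\<bar>)"

text \<open>n x n matrices are functions nat => nat => complex, indices i,j in {1..n}.\<close>
definition Dmat :: "(nat \<Rightarrow> nat \<Rightarrow> real) \<Rightarrow> nat \<Rightarrow> nat \<Rightarrow> nat \<Rightarrow> complex" where
  "Dmat th n i j = complex_of_real (deriv (lagr th n j) (th n i))"

definition shifted :: "(nat \<Rightarrow> nat \<Rightarrow> real) \<Rightarrow> nat \<Rightarrow> complex \<Rightarrow> nat \<Rightarrow> nat \<Rightarrow> complex" where
  "shifted th n z i j = Dmat th n i j - (if i = j then z else 0)"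

definition mat_invertible :: "nat \<Rightarrow> (nat \<Rightarrow> nat \<Rightarrow> complex) \<Rightarrow> bool" where
  "mat_invertible n M \<longleftrightarrow> (\<exists>B. \<forall>i\<in>{1..n}. \<forall>j\<in>{1..n}.
      (\<Sum>k=1..n. B i k * M k j) = (if i = j then 1 else 0) \<and>
      (\<Sum>k=1..n. M i k * B k j) = (if i = j then 1 else 0))"

text \<open>y = (D - lambda I)^{-1} D 1, as the unique solution (supported on {1..n}) of
 (D - lambda I) y = D 1.\<close>
definition yvec :: "(nat \<Rightarrow> nat \<Rightarrow> real) \<Rightarrow> nat \<Rightarrow> complex \<Rightarrow> nat \<Rightarrow> complex" where
  "yvec th n z = (THE y. (\<forall>i\<in>{1..n}. (\<Sum>j=1..n. shifted th n z i j * y j) = (\<Sum>j=1..n. Dmat th n i j))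
                         \<and> (\<forall>i. i \<notin> {1..n} \<longrightarrow> y i = 0))"

definition pin :: "(nat \<Rightarrow> nat \<Rightarrow> real) \<Rightarrow> nat \<Rightarrow> complex \<Rightarrow> real \<Rightarrow> complex" where
  "pin th n z t = complex_of_real (lagr th n 0 t)
      + (\<Sum>j=1..n. yvec th n z j * complex_of_real (lagr th n j t))"

definition Delta0 :: "(real \<Rightarrow> (real \<Rightarrow> real) \<Rightarrow> real) \<Rightarrow> complex \<Rightarrow> real \<Rightarrow> complex" where
  "Delta0 L z \<alpha> = z - cext (L \<alpha>) (expf z)"

definition Deltan :: "(nat \<Rightarrow> nat \<Rightarrow> real) \<Rightarrow> (real \<Rightarrow> (real \<Rightarrow> real) \<Rightarrow> real) \<Rightarrow> nat
                       \<Rightarrow> complex \<Rightarrow> real \<Rightarrow> complex" where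
  "Deltan th L n z \<alpha> = z - cext (L \<alpha>) (pin th n z)"

end

theory Submission
  imports Defs "HOL-Computational_Algebra.Polynomial" "Jordan_Normal_Form.Determinant"
    "HOL-Real_Asymp.Real_Asymp"
begin

text \<open>
  For z \<noteq> 0, \<pi>_n(z) is the collocation polynomial p: deg p \<le> n, p(0) = 1, and p' - z p
  vanishes at the nodes \<theta>_1, ..., \<theta>_n, hence equals c \<omega> with \<omega>(t) = (t - \<theta>_1) \<cdots> (t - \<theta>_n).
  The equation p' - z p = c \<omega> is solved explicitly by p = (\<Sum>_m z^(n-m) \<omega>^(m)) / T(z) with
  the characteristic sum T(z) = \<Sum>_m z^(n-m) m! \<omega>_m, which gives c = - z^(n+1) / T(z); the
  same formula shows that the collocation system, i.e. D - z I, is uniquely solvable whenever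
  T(z) \<noteq> 0. Comparing T(z)/n! coefficientwise with \<Prod>_i (1 - \<theta>_i z / n) shows
  T(z)/n! \<ge> exp(-R)/2 for |z| \<le> R and n large. The error e^(z\<theta>) - p(\<theta>) solves a linear ODE
  forced by c \<omega>, with |\<omega>| \<le> 1 on [-1, 0], so it is O(R^(n+1)/n!) = O((e R/n)^n) uniformly in z;
  applying L(\<alpha>), which is uniformly bounded for \<alpha> in a compact set, bounds \<Delta>_0 - \<Delta>_n.
\<close>

section \<open>Polynomials\<close>

lemma poly_map_poly_of_real:
  "poly (map_poly of_real p) (of_real x :: 'a::real_field) = of_real (poly p x)"
  by (induction p) (simp_all add: map_poly_pCons)

lemma pderiv_map_poly_of_real:
  "pderiv (map_poly of_real p :: 'a::real_field poly) = map_poly of_real (pderiv p)"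
  by (intro poly_eqI) (simp add: coeff_pderiv coeff_map_poly)

lemma poly_zero_if_many_roots:
  fixes p :: "'a::idom poly"
  assumes "finite A" "card A > degree p" "\<forall>x\<in>A. poly p x = 0"
  shows "p = 0"
proof (rule ccontr)
  assume p: "p \<noteq> 0"
  have "card A \<le> card {x. poly p x = 0}"
    using assms(3) poly_roots_finite[OF p] by (intro card_mono) auto
  also have "\<dots> \<le> degree p" by (rule card_poly_roots_bound[OF p])
  finally show False using assms(2) by simp
qed

lemma poly_higher_pderiv_0: "poly ((pderiv ^^ m) p) 0 = fact m * coeff p m"
  by (simp add: poly_0_coeff_0 coeff_higher_pderiv pochhammer_fact)

lemma higher_pderiv_eq_0: "degree p < m \<Longrightarrow> (pderiv ^^ m) p = 0"
  by (intro poly_eqI) (simp add: coeff_higher_pderiv coeff_eq_0)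

lemma smult_sum_right: "Polynomial.smult a (\<Sum>i\<in>A. f i) = (\<Sum>i\<in>A. Polynomial.smult a (f i))"
  by (induction A rule: infinite_finite_induct) (simp_all add: smult_add_right)

lemma pderiv_sum: "pderiv (\<Sum>i\<in>A. f i) = (\<Sum>i\<in>A. pderiv (f i))"
  by (induction A rule: infinite_finite_induct) (simp_all add: pderiv_add)

lemma poly_eq_sum_le_degree:
  fixes x :: "'a::{comm_semiring_0,semiring_1}"
  assumes "degree p \<le> N" shows "poly p x = (\<Sum>i\<le>N. coeff p i * x ^ i)"
  unfolding poly_altdef[of p x] using assms
  by (intro sum.mono_neutral_left) (auto simp: coeff_eq_0)

definition resolvent_poly :: "nat \<Rightarrow> 'a \<Rightarrow> 'a::idom poly \<Rightarrow> 'a poly" where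
  "resolvent_poly N z A = (\<Sum>m\<le>N. Polynomial.smult (z ^ (N - m)) ((pderiv ^^ m) A))"

lemma resolvent_poly_Suc:
  "resolvent_poly (Suc N) z A = Polynomial.smult z (resolvent_poly N z A) + (pderiv ^^ Suc N) A"
proof -
  have "(\<Sum>m\<le>N. Polynomial.smult (z ^ (Suc N - m)) ((pderiv ^^ m) A)) = Polynomial.smult z (resolvent_poly N z A)"
    unfolding resolvent_poly_def smult_sum_right
    by (intro sum.cong refl) (simp add: Suc_diff_le smult_smult)
  then show ?thesis by (simp add: resolvent_poly_def sum.atMost_Suc)
qed

lemma pderiv_resolvent_poly:
  "pderiv (resolvent_poly N z A) - Polynomial.smult z (resolvent_poly N z A)
     = (pderiv ^^ Suc N) A - Polynomial.smult (z ^ Suc N) A"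
proof (induction N)
  case 0
  then show ?case by (simp add: resolvent_poly_def)
next
  case (Suc N)
  define S where "S = resolvent_poly N z A"
  define D where "D = (pderiv ^^ Suc N) A"
  have "pderiv (resolvent_poly (Suc N) z A) - Polynomial.smult z (resolvent_poly (Suc N) z A)
      = Polynomial.smult z (pderiv S - Polynomial.smult z S) + pderiv D - Polynomial.smult z D"
    unfolding resolvent_poly_Suc S_def D_def
    by (simp add: pderiv_add pderiv_smult smult_add_right smult_diff_right)
  also have "\<dots> = pderiv D - Polynomial.smult (z ^ Suc (Suc N)) A"
    using Suc unfolding S_def D_def by (simp add: smult_diff_right smult_smult mult.commute)
  finally show ?case by (simp add: D_def)
qed

lemma pderiv_resolvent_poly_of_degree:
  assumes "degree A \<le> N"
  shows "pderiv (resolvent_poly N z A) - Polynomial.smult z (resolvent_poly N z A)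
           = - Polynomial.smult (z ^ Suc N) A"
proof -
  have "(pderiv ^^ Suc N) A = 0" using assms by (intro higher_pderiv_eq_0) simp
  then show ?thesis by (simp only: pderiv_resolvent_poly) simp
qed

lemma degree_resolvent_poly:
  fixes A :: "'a::{idom,ring_char_0} poly"
  assumes "degree A \<le> N" shows "degree (resolvent_poly N z A) \<le> N"
  unfolding resolvent_poly_def using assms
  by (intro degree_sum_le) (auto simp: degree_higher_pderiv intro: le_trans[OF degree_smult_le])

lemma resolvent_poly_smult: "resolvent_poly N z (Polynomial.smult c A) = Polynomial.smult c (resolvent_poly N z A)"
  unfolding resolvent_poly_def
  by (simp add: higher_pderiv_smult smult_sum_right smult_smult mult.commute)

lemma pderiv_eq_smult_imp_zero:
  fixes V :: "'a::{idom,ring_char_0} poly"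
  assumes "z \<noteq> 0" "pderiv V = Polynomial.smult z V" shows "V = 0"
proof (rule ccontr)
  assume V: "V \<noteq> 0"
  show False
  proof (cases "degree V = 0")
    case True
    then show False using assms V by (simp add: pderiv_eq_0_iff[THEN iffD2])
  next
    case False
    then have "degree (pderiv V) \<noteq> degree (Polynomial.smult z V)"
      using assms(1) by (simp add: degree_pderiv)
    then show False using assms(2) by simp
  qed
qed

text \<open>The polynomial solutions of q' - z q = R are unique for z \<noteq> 0, so every Q of degree
  at most n is recovered from its residual.\<close>
lemma smult_power_eq_resolvent_poly:
  fixes Q :: "'a::{field,ring_char_0} poly"
  assumes "z \<noteq> 0" "degree Q \<le> n"
  shows "Polynomial.smult (z ^ Suc n) Q = - resolvent_poly n z (pderiv Q - Polynomial.smult z Q)"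
proof -
  define R where "R = pderiv Q - Polynomial.smult z Q"
  have dR: "degree R \<le> n" unfolding R_def using assms(2)
    by (intro degree_diff_le) (auto simp: degree_pderiv intro: le_trans[OF degree_smult_le])
  define V where "V = resolvent_poly n z R + Polynomial.smult (z ^ Suc n) Q"
  have "pderiv V - Polynomial.smult z V =
        (pderiv (resolvent_poly n z R) - Polynomial.smult z (resolvent_poly n z R)) + Polynomial.smult (z ^ Suc n) R"
    unfolding V_def R_def by (simp add: pderiv_add pderiv_smult smult_add_right smult_diff_right algebra_simps)
  also have "\<dots> = 0" using pderiv_resolvent_poly_of_degree[OF dR] by simp
  finally have "V = 0" using pderiv_eq_smult_imp_zero[OF assms(1)] by simp
  then show ?thesis unfolding V_def R_def by (simp add: eq_neg_iff_add_eq_0 add.commute)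
qed

section \<open>Meshes and Lagrange polynomials\<close>

lemma mesh_less:
  assumes "is_mesh a n" "i < j" "j \<le> n" shows "a j < a i"
  using assms(2,3)
proof (induction j)
  case 0
  then show ?case by simp
next
  case (Suc j)
  have "a (Suc j) < a j" using assms(1) Suc.prems unfolding is_mesh_def by auto
  then show ?case using Suc by (cases "i = j") auto
qed

lemma mesh_inj_on: "is_mesh a n \<Longrightarrow> inj_on a {0..n}"
  by (rule inj_onI) (metis atLeastAtMost_iff linorder_neqE_nat mesh_less order_less_irrefl)

lemma mesh_bounds:
  assumes "is_mesh a n" "i \<le> n" shows "-1 \<le> a i" "a i \<le> 0"
proof -
  have "a n \<le> a i" using mesh_less[OF assms(1), of i n] assms(2) by (cases "i = n") auto
  then show "-1 \<le> a i" using assms(1) unfolding is_mesh_def by simp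
  have "a i \<le> a 0" using mesh_less[OF assms(1), of 0 i] assms(2) by (cases "i = 0") auto
  then show "a i \<le> 0" using assms(1) unfolding is_mesh_def by simp
qed

abbreviation cnode :: "(nat \<Rightarrow> real) \<Rightarrow> nat \<Rightarrow> complex" where
  "cnode a i \<equiv> complex_of_real (a i)"

lemma cnode_inj_on: "is_mesh a n \<Longrightarrow> inj_on (cnode a) {0..n}"
  using mesh_inj_on by (auto simp: inj_on_def)

definition lagrange_rpoly :: "(nat \<Rightarrow> real) \<Rightarrow> nat \<Rightarrow> nat \<Rightarrow> real poly" where
  "lagrange_rpoly a n j = (\<Prod>m\<in>{0..n}-{j}. Polynomial.smult (1 / (a j - a m)) [:- a m, 1:])"

definition lagrange_poly :: "(nat \<Rightarrow> real) \<Rightarrow> nat \<Rightarrow> nat \<Rightarrow> complex poly" where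
  "lagrange_poly a n j = map_poly complex_of_real (lagrange_rpoly a n j)"

lemma lagr_eq_poly: "lagr th n j = poly (lagrange_rpoly (th n) n j)"
  unfolding lagr_def lagrange_rpoly_def poly_prod
  by (intro ext prod.cong refl) (simp add: diff_divide_distrib)

lemma lagr_eq_poly_lagrange_poly:
  "complex_of_real (lagr th n j x) = poly (lagrange_poly (th n) n j) (complex_of_real x)"
  by (simp add: lagr_eq_poly lagrange_poly_def poly_map_poly_of_real)

lemma degree_lagrange_poly: "j \<le> n \<Longrightarrow> degree (lagrange_poly a n j) \<le> n"
proof -
  assume "j \<le> n"
  have "degree (lagrange_rpoly a n j)
          \<le> sum (degree \<circ> (\<lambda>m. Polynomial.smult (1 / (a j - a m)) [:- a m, 1:])) ({0..n}-{j})"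
    unfolding lagrange_rpoly_def by (rule degree_prod_sum_le) simp
  also have "\<dots> \<le> (\<Sum>m\<in>{0..n}-{j}. 1)"
    by (intro sum_mono le_trans[OF degree_smult_le]) simp
  also have "\<dots> = n" using \<open>j \<le> n\<close> by simp
  finally show ?thesis by (simp add: lagrange_poly_def degree_map_poly)
qed

lemma poly_lagrange_poly_node:
  assumes "is_mesh a n" "i \<le> n" "j \<le> n"
  shows "poly (lagrange_poly a n j) (cnode a i) = (if i = j then 1 else 0)"
proof -
  have "poly (lagrange_rpoly a n j) (a i) = (if i = j then 1 else 0)"
  proof (cases "i = j")
    case True
    have "a j \<noteq> a m" if "m \<in> {0..n}-{j}" for m
      using that assms(3) inj_onD[OF mesh_inj_on[OF assms(1)], of j m] by auto
    then show ?thesis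
      using True unfolding lagrange_rpoly_def poly_prod
      by (simp add: diff_divide_distrib[symmetric])
  next
    case False
    then show ?thesis using assms(2,3) unfolding lagrange_rpoly_def poly_prod
      by (intro prod_zero[THEN trans[OF _ if_not_P[symmetric]]]) (auto intro!: bexI[of _ i])
  qed
  then show ?thesis by (simp add: lagrange_poly_def poly_map_poly_of_real)
qed

lemma lagrange_interpolation:
  assumes "is_mesh a n" "degree q \<le> n"
  shows "q = (\<Sum>j=0..n. Polynomial.smult (poly q (cnode a j)) (lagrange_poly a n j))"
proof -
  define r where "r = q - (\<Sum>j=0..n. Polynomial.smult (poly q (cnode a j)) (lagrange_poly a n j))"
  have "degree (\<Sum>j=0..n. Polynomial.smult (poly q (cnode a j)) (lagrange_poly a n j)) \<le> n"
    by (intro degree_sum_le) (auto intro: le_trans[OF degree_smult_le] degree_lagrange_poly)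
  then have dr: "degree r \<le> n" unfolding r_def using assms(2) degree_diff_le by blast
  have "poly r (cnode a i) = 0" if "i \<le> n" for i
  proof -
    have "(\<Sum>j=0..n. poly q (cnode a j) * poly (lagrange_poly a n j) (cnode a i))
          = (\<Sum>j=0..n. if j = i then poly q (cnode a i) else 0)"
      by (intro sum.cong refl) (auto simp: poly_lagrange_poly_node[OF assms(1) that])
    then show ?thesis using that unfolding r_def by (simp add: poly_sum)
  qed
  then have "r = 0"
    using dr card_image[OF cnode_inj_on[OF assms(1)]]
    by (intro poly_zero_if_many_roots[of "cnode a ` {0..n}"]) auto
  then show ?thesis unfolding r_def by simp
qed

lemma sum_lagrange_poly: "is_mesh a n \<Longrightarrow> (\<Sum>j=0..n. lagrange_poly a n j) = 1"
  using lagrange_interpolation[of a n 1] by simp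

lemma Dmat_eq_pderiv: "Dmat th n i j = poly (pderiv (lagrange_poly (th n) n j)) (cnode (th n) i)"
proof -
  have "deriv (lagr th n j) (th n i) = poly (pderiv (lagrange_rpoly (th n) n j)) (th n i)"
    unfolding lagr_eq_poly by (rule DERIV_imp_deriv) (rule poly_DERIV)
  then show ?thesis
    by (simp add: Dmat_def lagrange_poly_def pderiv_map_poly_of_real poly_map_poly_of_real)
qed

section \<open>The node polynomial\<close>

definition node_poly :: "(nat \<Rightarrow> real) \<Rightarrow> nat \<Rightarrow> complex poly" where
  "node_poly a n = (\<Prod>i\<in>{1..n}. [:- cnode a i, 1:])"

lemma prod_linear_coeff_bounds:
  fixes x :: "nat \<Rightarrow> real"
  assumes "finite I" "\<forall>i\<in>I. 0 \<le> x i \<and> x i \<le> 1"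
  defines "P \<equiv> \<Prod>i\<in>I. [:complex_of_real (x i), 1:]"
  shows "degree P \<le> card I \<and> coeff P (card I) = 1 \<and>
         (\<forall>m. \<exists>r. coeff P m = complex_of_real r \<and> 0 \<le> r \<and> r \<le> real (card I choose m))"
  using assms(1,2) unfolding P_def
proof (induction I rule: finite_induct)
  case empty
  show ?case by (auto intro!: exI[of _ "of_bool (m = 0)" for m] simp: coeff_1)
next
  case (insert i I)
  define P where "P = (\<Prod>i\<in>I. [:complex_of_real (x i), 1:])"
  define c where "c = complex_of_real (x i)"
  have IH: "degree P \<le> card I" "coeff P (card I) = 1"
    "\<forall>m. \<exists>r. coeff P m = complex_of_real r \<and> 0 \<le> r \<and> r \<le> real (card I choose m)"
    using insert by (auto simp: P_def)
  have eq: "(\<Prod>i\<in>insert i I. [:complex_of_real (x i), 1:]) = Polynomial.smult c P + pCons 0 P"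
    using insert(1,2) by (simp add: P_def c_def)
  have co: "coeff (Polynomial.smult c P + pCons 0 P) m
              = c * coeff P m + (case m of 0 \<Rightarrow> 0 | Suc k \<Rightarrow> coeff P k)" for m
    by (simp add: coeff_pCons)
  have xi: "0 \<le> x i" "x i \<le> 1" using insert.prems by auto
  have "\<exists>r. coeff (Polynomial.smult c P + pCons 0 P) m = complex_of_real r \<and> 0 \<le> r
              \<and> r \<le> real (Suc (card I) choose m)" for m
  proof -
    obtain r1 where r1: "coeff P m = complex_of_real r1" "0 \<le> r1" "r1 \<le> real (card I choose m)"
      using IH(3) by blast
    have xr1: "x i * r1 \<le> real (card I choose m)" "0 \<le> x i * r1"
      using mult_left_le_one_le[of r1 "x i"] r1 xi by auto
    show ?thesis
    proof (cases m)
      case 0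
      then show ?thesis using r1 xr1 by (intro exI[of _ "x i * r1"]) (simp add: co c_def)
    next
      case (Suc k)
      obtain r2 where r2: "coeff P k = complex_of_real r2" "0 \<le> r2" "r2 \<le> real (card I choose k)"
        using IH(3) by blast
      show ?thesis using r1 r2 xr1 Suc by (intro exI[of _ "x i * r1 + r2"]) (simp add: co c_def)
    qed
  qed
  moreover have "degree (Polynomial.smult c P + pCons 0 P) \<le> Suc (card I)"
    using IH(1) by (intro degree_add_le) (auto intro: le_trans[OF degree_smult_le])
  moreover have "coeff P (Suc (card I)) = 0" using IH(1) by (simp add: coeff_eq_0)
  ultimately show ?case using insert(1,2) IH(2) unfolding eq by (simp add: co)
qed

lemma node_poly_coeff_bounds:
  assumes "is_mesh a n"
  shows "degree (node_poly a n) \<le> n" "coeff (node_poly a n) n = 1"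
    "\<exists>r. coeff (node_poly a n) m = complex_of_real r \<and> 0 \<le> r \<and> r \<le> real (n choose m)"
proof -
  have "\<forall>i\<in>{1..n}. 0 \<le> - a i \<and> - a i \<le> 1" using mesh_bounds[OF assms] by force
  from prod_linear_coeff_bounds[OF _ this]
  show "degree (node_poly a n) \<le> n" "coeff (node_poly a n) n = 1"
    "\<exists>r. coeff (node_poly a n) m = complex_of_real r \<and> 0 \<le> r \<and> r \<le> real (n choose m)"
    unfolding node_poly_def by auto
qed

lemma poly_node_poly_node: "i \<in> {1..n} \<Longrightarrow> poly (node_poly a n) (cnode a i) = 0"
  unfolding node_poly_def poly_prod by (intro prod_zero) (auto intro!: bexI[of _ i])

lemma norm_poly_node_poly_le_1:
  assumes "is_mesh a n" "s \<in> {-1..0}"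
  shows "norm (poly (node_poly a n) (complex_of_real s)) \<le> 1"
proof -
  have "norm (poly (node_poly a n) (complex_of_real s)) = (\<Prod>i\<in>{1..n}. \<bar>s - a i\<bar>)"
    unfolding node_poly_def poly_prod prod_norm[symmetric] by (simp flip: of_real_diff)
  also have "\<dots> \<le> 1"
    using mesh_bounds[OF assms(1)] assms(2) by (intro prod_le_1) force
  finally show ?thesis .
qed

lemma eq_smult_node_poly:
  assumes "is_mesh a n" "degree R \<le> n" "\<forall>i\<in>{1..n}. poly R (cnode a i) = 0"
  shows "R = Polynomial.smult (coeff R n) (node_poly a n)"
proof -
  define E where "E = R - Polynomial.smult (coeff R n) (node_poly a n)"
  have "degree E \<le> n" unfolding E_def using assms(2) node_poly_coeff_bounds(1)[OF assms(1)]
    by (intro degree_diff_le) (auto intro: le_trans[OF degree_smult_le])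
  moreover have "coeff E n = 0" unfolding E_def using node_poly_coeff_bounds(2)[OF assms(1)] by simp
  ultimately have "E = 0 \<or> degree E < n" by (metis leading_coeff_0_iff le_neq_implies_less)
  moreover have "degree E < n \<Longrightarrow> E = 0"
  proof (rule poly_zero_if_many_roots[of "cnode a ` {1..n}"])
    have "inj_on (cnode a) {1..n}" using cnode_inj_on[OF assms(1)] by (rule inj_on_subset) auto
    then show "degree E < n \<Longrightarrow> degree E < card (cnode a ` {1..n})" by (simp add: card_image)
    show "\<forall>x\<in>cnode a ` {1..n}. poly E x = 0"
      using assms(3) poly_node_poly_node by (auto simp: E_def)
  qed simp
  ultimately show ?thesis by (auto simp: E_def)
qed

section \<open>Solvability of the collocation system\<close>

definition trivial_kernel :: "nat \<Rightarrow> (nat \<Rightarrow> nat \<Rightarrow> complex) \<Rightarrow> bool" where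
  "trivial_kernel n M \<longleftrightarrow>
     (\<forall>y. (\<forall>i\<in>{1..n}. (\<Sum>j=1..n. M i j * y j) = 0) \<longrightarrow> (\<forall>j\<in>{1..n}. y j = 0))"

lemma trivial_kernel_imp_mat_invertible:
  assumes "trivial_kernel n M" shows "mat_invertible n M"
proof -
  define A where "A = mat n n (\<lambda>(i, j). M (Suc i) (Suc j))"
  have A: "A \<in> carrier_mat n n" unfolding A_def by simp
  have "Determinant.det A \<noteq> 0"
  proof
    assume "Determinant.det A = 0"
    then obtain v where v: "v \<in> carrier_vec n" "v \<noteq> 0\<^sub>v n" "A *\<^sub>v v = 0\<^sub>v n"
      using det_0_iff_vec_prod_zero_field[OF A] by auto
    have "(\<Sum>j=1..n. M i j * v $ (j - 1)) = 0" if "i \<in> {1..n}" for i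
    proof -
      have i: "i - 1 < n" "Suc (i - 1) = i" using that by auto
      then have "(A *\<^sub>v v) $ (i - 1) = (\<Sum>j<n. M i (Suc j) * v $ j)"
        using v(1) by (simp add: A_def scalar_prod_def lessThan_atLeast0)
      then show ?thesis using i(1) v(3) by (simp add: sum.atLeast1_atMost_eq)
    qed
    then have "v $ j = 0" if "j < n" for j
      using assms that unfolding trivial_kernel_def
      by (elim allE[of _ "\<lambda>j. v $ (j - 1)"]) (auto dest!: bspec[of _ _ "Suc j"])
    then have "v = 0\<^sub>v n" using v(1) by (intro eq_vecI) auto
    then show False using v(2) by simp
  qed
  from det_non_zero_imp_unit[OF A this, of "()"]
  obtain B where B: "B \<in> carrier_mat n n" "B * A = 1\<^sub>m n" "A * B = 1\<^sub>m n"
    unfolding Units_def ring_mat_def by auto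
  define B' where "B' i j = B $$ (i - 1, j - 1)" for i j
  show ?thesis unfolding mat_invertible_def
  proof (intro exI[of _ B'] ballI conjI)
    fix i j assume "i \<in> {1..n}" "j \<in> {1..n}"
    then have ij: "i - 1 < n" "Suc (i - 1) = i" "j - 1 < n" "Suc (j - 1) = j" "(i - 1 = j - 1) = (i = j)"
      by auto
    have "(B * A) $$ (i - 1, j - 1) = (\<Sum>k<n. B' i (Suc k) * M (Suc k) j)"
      using ij B(1) by (simp add: A_def scalar_prod_def B'_def lessThan_atLeast0)
    then show "(\<Sum>k=1..n. B' i k * M k j) = (if i = j then 1 else 0)"
      using B(2) ij by (simp add: sum.atLeast1_atMost_eq)
    have "(A * B) $$ (i - 1, j - 1) = (\<Sum>k<n. M i (Suc k) * B' (Suc k) j)"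
      using ij B(1) by (simp add: A_def scalar_prod_def B'_def lessThan_atLeast0)
    then show "(\<Sum>k=1..n. M i k * B' k j) = (if i = j then 1 else 0)"
      using B(3) ij by (simp add: sum.atLeast1_atMost_eq)
  qed
qed

definition char_sum :: "(nat \<Rightarrow> real) \<Rightarrow> nat \<Rightarrow> complex \<Rightarrow> complex" where
  "char_sum a n z = poly (resolvent_poly n z (node_poly a n)) 0"

lemma char_sum_eq: "char_sum a n z = (\<Sum>m\<le>n. z ^ (n - m) * (fact m * coeff (node_poly a n) m))"
  unfolding char_sum_def resolvent_poly_def by (simp add: poly_sum poly_higher_pderiv_0)

definition lagrange_comb :: "(nat \<Rightarrow> real) \<Rightarrow> nat \<Rightarrow> (nat \<Rightarrow> complex) \<Rightarrow> complex poly" where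
  "lagrange_comb a n y = (\<Sum>j=1..n. Polynomial.smult (y j) (lagrange_poly a n j))"

lemma degree_lagrange_comb: "degree (lagrange_comb a n y) \<le> n"
  unfolding lagrange_comb_def
  by (intro degree_sum_le) (auto intro: le_trans[OF degree_smult_le] degree_lagrange_poly)

lemma poly_lagrange_comb_node:
  assumes "is_mesh a n" "i \<le> n"
  shows "poly (lagrange_comb a n y) (cnode a i) = (if i \<in> {1..n} then y i else 0)"
proof -
  have "poly (lagrange_comb a n y) (cnode a i) = (\<Sum>j=1..n. if j = i then y j else 0)"
    unfolding lagrange_comb_def poly_sum
    by (intro sum.cong refl) (auto simp: poly_lagrange_poly_node[OF assms])
  then show ?thesis by simp
qed

lemma poly_lagrange_comb_0: "is_mesh a n \<Longrightarrow> poly (lagrange_comb a n y) 0 = 0"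
  using poly_lagrange_comb_node[of a n 0 y] by (simp add: is_mesh_def)

lemma shifted_mult_eq_residual:
  assumes "is_mesh (th n) n" "i \<in> {1..n}"
  shows "(\<Sum>j=1..n. shifted th n z i j * y j) =
         poly (pderiv (lagrange_comb (th n) n y) - Polynomial.smult z (lagrange_comb (th n) n y))
           (cnode (th n) i)"
proof -
  have "(\<Sum>j=1..n. shifted th n z i j * y j)
          = (\<Sum>j=1..n. Dmat th n i j * y j) - (\<Sum>j=1..n. if i = j then z * y j else 0)"
    unfolding shifted_def sum_subtractf[symmetric] by (intro sum.cong refl) (auto simp: algebra_simps)
  also have "(\<Sum>j=1..n. if i = j then z * y j else 0) = z * y i" using assms(2) by simp
  also have "(\<Sum>j=1..n. Dmat th n i j * y j) = poly (pderiv (lagrange_comb (th n) n y)) (cnode (th n) i)"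
    unfolding lagrange_comb_def pderiv_sum poly_sum Dmat_eq_pderiv
    by (simp add: pderiv_smult mult.commute)
  finally show ?thesis using poly_lagrange_comb_node[OF assms(1), of i y] assms(2) by simp
qed

lemma collocation_uniqueness_0:
  fixes Q :: "complex poly"
  assumes "is_mesh a n" "degree Q \<le> n" "poly Q 0 = 0"
    and "\<forall>i\<in>{1..n}. poly (pderiv Q) (cnode a i) = 0"
  shows "Q = 0"
proof -
  have "pderiv Q = 0"
  proof (cases "n = 0")
    case True
    then show ?thesis using assms(2) by (simp add: pderiv_eq_0_iff)
  next
    case False
    have "inj_on (cnode a) {1..n}" using cnode_inj_on[OF assms(1)] by (rule inj_on_subset) auto
    then show ?thesis
      using assms(2,4) False
      by (intro poly_zero_if_many_roots[of "cnode a ` {1..n}"]) (auto simp: degree_pderiv card_image)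
  qed
  then have "degree Q = 0" by (simp add: pderiv_eq_0_iff)
  then show ?thesis using assms(3) by (auto elim!: degree_eq_zeroE)
qed

text \<open>The residual Q' - z Q vanishes at the nodes, so it is c times node_poly; evaluating at 0
  the explicit solution of q' - z q = c node_poly (smult_power_eq_resolvent_poly) gives
  c * char_sum = 0.\<close>
lemma collocation_uniqueness:
  fixes Q :: "complex poly"
  assumes mesh: "is_mesh a n" and "degree Q \<le> n" "poly Q 0 = 0"
    and res: "\<forall>i\<in>{1..n}. poly (pderiv Q - Polynomial.smult z Q) (cnode a i) = 0"
    and zT: "z = 0 \<or> char_sum a n z \<noteq> 0"
  shows "Q = 0"
proof (cases "z = 0")
  case True
  then show ?thesis using collocation_uniqueness_0[OF assms(1-3)] res by simp
next
  case False
  define R where "R = pderiv Q - Polynomial.smult z Q"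
  have dR: "degree R \<le> n" unfolding R_def using assms(2)
    by (intro degree_diff_le) (auto simp: degree_pderiv intro: le_trans[OF degree_smult_le])
  have "\<forall>i\<in>{1..n}. poly R (cnode a i) = 0" using res by (simp add: R_def)
  note Req = eq_smult_node_poly[OF mesh dR this]
  have ode: "Polynomial.smult (z ^ Suc n) Q = - resolvent_poly n z R"
    using smult_power_eq_resolvent_poly[OF False assms(2)] by (simp add: R_def)
  have "coeff R n * char_sum a n z = poly (resolvent_poly n z R) 0"
    by (subst Req) (simp add: resolvent_poly_smult char_sum_def)
  also have "\<dots> = 0" using arg_cong[OF ode, of "\<lambda>p. poly p 0"] assms(3) by simp
  finally have "R = 0" using Req zT False by simp
  then show ?thesis using ode False by (simp add: resolvent_poly_def)
qed

lemma shifted_trivial_kernel: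
  assumes mesh: "is_mesh (th n) n" and zT: "z = 0 \<or> char_sum (th n) n z \<noteq> 0"
  shows "trivial_kernel n (shifted th n z)"
  unfolding trivial_kernel_def
proof (intro allI impI ballI)
  fix y j
  assume "\<forall>i\<in>{1..n}. (\<Sum>j=1..n. shifted th n z i j * y j) = 0" and j: "j \<in> {1..n}"
  then have "lagrange_comb (th n) n y = 0"
    using shifted_mult_eq_residual[where th=th and n=n, OF mesh]
    by (intro collocation_uniqueness[OF mesh degree_lagrange_comb poly_lagrange_comb_0[OF mesh] _ zT])
      auto
  then show "y j = 0" using poly_lagrange_comb_node[OF mesh, of j y] j by simp
qed

lemma yvec_eqI:
  assumes ker: "trivial_kernel n (shifted th n z)"
    and sol: "\<forall>i\<in>{1..n}. (\<Sum>j=1..n. shifted th n z i j * y j) = (\<Sum>j=1..n. Dmat th n i j)"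
    and supp: "\<forall>i. i \<notin> {1..n} \<longrightarrow> y i = 0"
  shows "yvec th n z = y"
  unfolding yvec_def
proof (rule the_equality)
  fix y' assume y': "(\<forall>i\<in>{1..n}. (\<Sum>j=1..n. shifted th n z i j * y' j) = (\<Sum>j=1..n. Dmat th n i j))
                     \<and> (\<forall>i. i \<notin> {1..n} \<longrightarrow> y' i = 0)"
  have "\<forall>i\<in>{1..n}. (\<Sum>j=1..n. shifted th n z i j * (y' j - y j)) = 0"
    using y' sol by (simp add: right_diff_distrib sum_subtractf)
  then have "\<forall>j\<in>{1..n}. y' j - y j = 0"
    using spec[OF ker[unfolded trivial_kernel_def], of "\<lambda>j. y' j - y j"] by simp
  then show "y' = y" using y' supp by (intro ext) (metis eq_iff_diff_eq_0)
qed (use sol supp in blast)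

lemma pin_eq_poly:
  assumes mesh: "is_mesh (th n) n" and ker: "trivial_kernel n (shifted th n z)"
    and dp: "degree p \<le> n" and p0: "poly p 0 = 1"
    and res: "\<forall>i\<in>{1..n}. poly (pderiv p - Polynomial.smult z p) (cnode (th n) i) = 0"
  shows "pin th n z x = poly p (complex_of_real x)"
proof -
  let ?l = "lagrange_poly (th n) n"
  define y where "y j = (if j \<in> {1..n} then poly p (cnode (th n) j) else 0)" for j
  have th0: "th n 0 = 0" using mesh by (simp add: is_mesh_def)
  have "p = (\<Sum>j=0..n. Polynomial.smult (poly p (cnode (th n) j)) (?l j))"
    by (rule lagrange_interpolation[OF mesh dp])
  also have "\<dots> = Polynomial.smult (poly p (cnode (th n) 0)) (?l 0)
                  + (\<Sum>j=Suc 0..n. Polynomial.smult (poly p (cnode (th n) j)) (?l j))"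
    by (rule sum.atLeast_Suc_atMost) simp
  also have "(\<Sum>j=Suc 0..n. Polynomial.smult (poly p (cnode (th n) j)) (?l j)) = lagrange_comb (th n) n y"
    unfolding lagrange_comb_def y_def by (intro sum.cong) auto
  finally have p: "p = ?l 0 + lagrange_comb (th n) n y" using p0 th0 by simp
  have Dsum: "(\<Sum>j=1..n. Dmat th n i j) = - poly (pderiv (?l 0)) (cnode (th n) i)" for i
  proof -
    have "(\<Sum>j=1..n. ?l j) = 1 - ?l 0"
      using sum_lagrange_poly[OF mesh] sum.atLeast_Suc_atMost[OF le0, of ?l n]
      by (simp, metis add_diff_cancel_left')
    then show ?thesis
      unfolding Dmat_eq_pderiv poly_sum[symmetric] pderiv_sum[symmetric] by (simp add: pderiv_diff)
  qed
  have "(\<Sum>j=1..n. shifted th n z i j * y j) = (\<Sum>j=1..n. Dmat th n i j)" if i: "i \<in> {1..n}" for i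
  proof -
    have l0: "poly (?l 0) (cnode (th n) i) = 0" using poly_lagrange_poly_node[OF mesh, of i 0] i by simp
    have "lagrange_comb (th n) n y = p - ?l 0" using p by simp
    then have "(\<Sum>j=1..n. shifted th n z i j * y j)
        = poly (pderiv (p - ?l 0) - Polynomial.smult z (p - ?l 0)) (cnode (th n) i)"
      using shifted_mult_eq_residual[where th=th and n=n and z=z and y=y, OF mesh i] by simp
    also have "\<dots> = poly (pderiv p - Polynomial.smult z p) (cnode (th n) i)
        - poly (pderiv (?l 0)) (cnode (th n) i) + z * poly (?l 0) (cnode (th n) i)"
      by (simp add: pderiv_diff algebra_simps)
    also have "\<dots> = (\<Sum>j=1..n. Dmat th n i j)" using res i l0 Dsum by simp
    finally show ?thesis .
  qed
  then have "yvec th n z = y" by (intro yvec_eqI[OF ker]) (auto simp: y_def)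
  then show ?thesis
    unfolding pin_def lagr_eq_poly_lagrange_poly
    using arg_cong[OF p, of "\<lambda>q. poly q (complex_of_real x)"]
    by (simp add: lagrange_comb_def poly_sum)
qed

definition collocation_poly :: "(nat \<Rightarrow> real) \<Rightarrow> nat \<Rightarrow> complex \<Rightarrow> complex poly" where
  "collocation_poly a n z =
     (if z = 0 then 1 else Polynomial.smult (1 / char_sum a n z) (resolvent_poly n z (node_poly a n)))"

lemma collocation_poly:
  assumes mesh: "is_mesh a n" and zT: "z = 0 \<or> char_sum a n z \<noteq> 0"
  shows "degree (collocation_poly a n z) \<le> n" "poly (collocation_poly a n z) 0 = 1"
    "pderiv (collocation_poly a n z) - Polynomial.smult z (collocation_poly a n z) =
       Polynomial.smult (if z = 0 then 0 else - (z ^ Suc n) / char_sum a n z) (node_poly a n)"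
proof -
  have dom: "degree (node_poly a n) \<le> n" by (rule node_poly_coeff_bounds(1)[OF mesh])
  show "degree (collocation_poly a n z) \<le> n"
    unfolding collocation_poly_def using degree_resolvent_poly[OF dom]
    by (auto intro: le_trans[OF degree_smult_le])
  show "poly (collocation_poly a n z) 0 = 1"
    unfolding collocation_poly_def using zT by (auto simp: char_sum_def)
  show "pderiv (collocation_poly a n z) - Polynomial.smult z (collocation_poly a n z) =
       Polynomial.smult (if z = 0 then 0 else - (z ^ Suc n) / char_sum a n z) (node_poly a n)"
  proof (cases "z = 0")
    case False
    have "pderiv (collocation_poly a n z) - Polynomial.smult z (collocation_poly a n z)
      = Polynomial.smult (1 / char_sum a n z) (pderiv (resolvent_poly n z (node_poly a n))
          - Polynomial.smult z (resolvent_poly n z (node_poly a n)))"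
      using False by (simp add: collocation_poly_def pderiv_smult smult_diff_right smult_smult mult.commute)
    also have "\<dots> = Polynomial.smult (- (z ^ Suc n) / char_sum a n z) (node_poly a n)"
      unfolding pderiv_resolvent_poly_of_degree[OF dom] by (simp add: smult_smult)
    finally show ?thesis using False by simp
  qed (simp add: collocation_poly_def)
qed

lemma shifted_invertible_and_pin:
  assumes mesh: "is_mesh (th n) n" and zT: "z = 0 \<or> char_sum (th n) n z \<noteq> 0"
  shows "mat_invertible n (shifted th n z)"
    "pin th n z x = poly (collocation_poly (th n) n z) (complex_of_real x)"
proof -
  have ker: "trivial_kernel n (shifted th n z)" by (rule shifted_trivial_kernel[where th=th and n=n, OF mesh zT])
  then show "mat_invertible n (shifted th n z)" by (rule trivial_kernel_imp_mat_invertible)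
  show "pin th n z x = poly (collocation_poly (th n) n z) (complex_of_real x)"
    using collocation_poly[OF mesh zT] poly_node_poly_node
    by (intro pin_eq_poly[where th=th and n=n, OF mesh ker]) auto
qed

section \<open>The collocation error\<close>

lemma norm_exp_mult_of_real_le:
  assumes "\<bar>s\<bar> \<le> 1" shows "norm (exp (z * complex_of_real s)) \<le> exp (norm z)"
proof -
  have "norm (z * complex_of_real s) \<le> norm z"
    using mult_left_mono[OF assms, of "norm z"] by (simp add: norm_mult)
  then show ?thesis using norm_exp[of "z * complex_of_real s"] by (meson exp_le_cancel_iff order_trans)
qed

text \<open>Mean value bound for g(w) = 1 - exp(-z w) p(w), whose derivative is - c exp(-z w) q(w).\<close>
lemma norm_exp_minus_poly_le:
  fixes p q :: "complex poly"
  assumes ode: "pderiv p - Polynomial.smult z p = Polynomial.smult c q" and p0: "poly p 0 = 1"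
    and q: "\<forall>s\<in>{-1..0}. norm (poly q (complex_of_real s)) \<le> 1" and x: "x \<in> {-1..0}"
  shows "norm (exp (z * complex_of_real x) - poly p (complex_of_real x)) \<le> exp (2 * norm z) * norm c"
proof -
  define S where "S = complex_of_real ` {-1..0}"
  define g where "g w = 1 - exp (- z * w) * poly p w" for w
  define g' where "g' w = - exp (- z * w) * (c * poly q w)" for w
  have "convex S" unfolding S_def
    by (rule convex_linear_image[OF bounded_linear.linear[OF bounded_linear_of_real]]) simp
  moreover have "(g has_field_derivative g' w) (at w within S)" for w
  proof -
    have "poly (pderiv p) w - z * poly p w = c * poly q w"
      using arg_cong[OF ode, of "\<lambda>r. poly r w"] by simp
    then have "- (exp (- z * w) * (- z) * poly p w + exp (- z * w) * poly (pderiv p) w) = g' w"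
      unfolding g'_def by (simp add: algebra_simps)
    moreover have "(g has_field_derivative
        - (exp (- z * w) * (- z) * poly p w + exp (- z * w) * poly (pderiv p) w)) (at w)"
      unfolding g_def by (auto intro!: derivative_eq_intros)
    ultimately show ?thesis by (simp add: has_field_derivative_at_within)
  qed
  moreover have "norm (g' w) \<le> exp (norm z) * norm c" if w: "w \<in> S" for w
  proof -
    obtain s where s: "s \<in> {-1..0}" "w = complex_of_real s" using w unfolding S_def by blast
    have "norm (g' w) = norm (exp (- z * w)) * (norm c * norm (poly q w))"
      by (simp add: g'_def norm_mult)
    also have "\<dots> \<le> exp (norm z) * (norm c * 1)"
      using norm_exp_mult_of_real_le[of s "- z"] q s
      by (intro mult_mono mult_left_mono) auto
    finally show ?thesis by simp
  qed
  moreover have "complex_of_real x \<in> S" "0 \<in> S" using x unfolding S_def by force+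
  ultimately have "norm (g (complex_of_real x) - g 0) \<le> exp (norm z) * norm c * norm (complex_of_real x - 0)"
    by (rule field_differentiable_bound)
  also have "\<dots> \<le> exp (norm z) * norm c" using x by (intro mult_left_le) auto
  finally have g: "norm (g (complex_of_real x)) \<le> exp (norm z) * norm c" using p0 by (simp add: g_def)
  have "exp (z * complex_of_real x) - poly p (complex_of_real x) = exp (z * complex_of_real x) * g (complex_of_real x)"
    unfolding g_def using exp_minus_inverse[of "z * complex_of_real x"] by (simp add: algebra_simps)
  also have "norm \<dots> \<le> exp (norm z) * (exp (norm z) * norm c)"
    unfolding norm_mult using norm_exp_mult_of_real_le[of x z] x g by (intro mult_mono) auto
  also have "\<dots> = exp (2 * norm z) * norm c" by (simp only: mult_2 exp_add mult.assoc)
  finally show ?thesis .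
qed

section \<open>A lower bound for the characteristic sum\<close>

lemma real_pow_mult_fact_le:
  assumes "m \<le> n" shows "real n ^ m * fact n \<le> fact m * real n ^ n"
proof -
  have "fact m dvd (fact n :: nat)" using assms by (simp add: fact_dvd)
  then have "(fact n :: real) = fact m * real (fact n div fact m)"
    by (metis dvd_mult_div_cancel of_nat_fact of_nat_mult)
  also have "\<dots> \<le> fact m * real n ^ (n - m)"
    using fact_div_fact_le_pow[of "n - m" n] assms
    by (intro mult_left_mono) (simp_all flip: of_nat_power)
  finally have "real n ^ m * fact n \<le> real n ^ m * (fact m * real n ^ (n - m))"
    by (intro mult_left_mono) simp_all
  also have "\<dots> = fact m * real n ^ n"
    using assms by (simp add: power_add[symmetric] algebra_simps)
  finally show ?thesis .
qed

lemma sum_binomial_fact_ratio: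
  "(\<Sum>m\<le>n. R ^ (n - m) * real (n choose m) * (fact m / fact n)) = (\<Sum>j\<le>n. R ^ j / fact j)"
proof -
  have "(\<Sum>m\<le>n. R ^ (n - m) * real (n choose m) * (fact m / fact n)) = (\<Sum>m\<le>n. R ^ (n - m) / fact (n - m))"
    by (intro sum.cong refl) (simp add: binomial_fact)
  also have "\<dots> = (\<Sum>j\<le>n. R ^ j / fact j)"
    unfolding atMost_atLeast0 by (subst sum.atLeastAtMost_rev) simp
  finally show ?thesis .
qed

lemma sum_binomial_pow_ratio:
  assumes "n \<ge> 1"
  shows "(\<Sum>m\<le>n. R ^ (n - m) * real (n choose m) * (real n ^ m / real n ^ n)) = (1 + R / real n) ^ n"
proof -
  have "(real n + R) ^ n = (\<Sum>m\<le>n. real (n choose m) * real n ^ m * R ^ (n - m))"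
    by (rule binomial_ring)
  then have "(\<Sum>m\<le>n. R ^ (n - m) * real (n choose m) * (real n ^ m / real n ^ n)) = (real n + R) ^ n / real n ^ n"
    by (simp add: sum_divide_distrib algebra_simps)
  also have "\<dots> = (1 + R / real n) ^ n"
    using assms by (simp add: power_divide[symmetric] add_divide_distrib)
  finally show ?thesis .
qed

lemma node_poly_homogeneous:
  assumes "is_mesh a n" "z \<noteq> 0"
  shows "(\<Sum>m\<le>n. z ^ (n - m) * of_nat n ^ m * coeff (node_poly a n) m)
           = (\<Prod>i\<in>{1..n}. of_nat n - cnode a i * z)"
proof -
  have "(\<Sum>m\<le>n. z ^ (n - m) * of_nat n ^ m * coeff (node_poly a n) m)
          = (\<Sum>m\<le>n. z ^ n * (coeff (node_poly a n) m * (of_nat n / z) ^ m))"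
  proof (intro sum.cong refl)
    fix m assume "m \<in> {..n}"
    then have "z ^ n = z ^ (n - m) * z ^ m" by (simp add: power_add[symmetric])
    then show "z ^ (n - m) * of_nat n ^ m * coeff (node_poly a n) m
                 = z ^ n * (coeff (node_poly a n) m * (of_nat n / z) ^ m)"
      using assms(2) by (simp add: power_divide)
  qed
  also have "\<dots> = z ^ n * poly (node_poly a n) (of_nat n / z)"
    by (simp add: poly_eq_sum_le_degree[OF node_poly_coeff_bounds(1)[OF assms(1)]] sum_distrib_left)
  also have "\<dots> = (\<Prod>i\<in>{1..n}. z) * (\<Prod>i\<in>{1..n}. of_nat n / z - cnode a i)"
    by (simp add: node_poly_def poly_prod)
  also have "\<dots> = (\<Prod>i\<in>{1..n}. of_nat n - cnode a i * z)"
    unfolding prod.distrib[symmetric] using assms(2)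
    by (intro prod.cong refl) (simp add: right_diff_distrib)
  finally show ?thesis .
qed

lemma norm_prod_node_lower:
  assumes "is_mesh a n" "norm z \<le> R" "R < real n"
  shows "(real n - R) ^ n \<le> norm (\<Prod>i\<in>{1..n}. of_nat n - cnode a i * z)"
proof -
  have "(real n - R) ^ n = (\<Prod>i\<in>{1..n}. real n - R)" by simp
  also have "\<dots> \<le> (\<Prod>i\<in>{1..n}. norm (of_nat n - cnode a i * z))"
  proof (intro prod_mono conjI)
    fix i assume "i \<in> {1..n}"
    then have "\<bar>a i\<bar> \<le> 1" using mesh_bounds[OF assms(1), of i] by auto
    then have "norm (cnode a i * z) \<le> R"
      using mult_mono[of "\<bar>a i\<bar>" 1 "norm z" R] assms(2) by (simp add: norm_mult)
    then show "real n - R \<le> norm (of_nat n - cnode a i * z)"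
      using norm_triangle_ineq2[of "of_nat n :: complex" "cnode a i * z"] by simp
  qed (use assms(3) in simp)
  also have "\<dots> = norm (\<Prod>i\<in>{1..n}. of_nat n - cnode a i * z)" by (simp add: prod_norm)
  finally show ?thesis .
qed

text \<open>The m-th terms of the two sums differ by z^(n-m) \<omega>_m (m!/n! - n^m/n^n), where the weight
  is nonnegative and 0 \<le> \<omega>_m \<le> binomial n m; summing these bounds gives the partial sum of
  exp R minus the binomial expansion of (1 + R/n)^n.\<close>
lemma norm_char_sum_minus_homogeneous_le:
  assumes mesh: "is_mesh a n" and z: "norm z \<le> R" and n: "n \<ge> 1"
  shows "norm (char_sum a n z / fact n
            - (\<Sum>m\<le>n. z ^ (n - m) * of_nat n ^ m * coeff (node_poly a n) m) / of_nat n ^ n)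
         \<le> (\<Sum>j\<le>n. R ^ j / fact j) - (1 + R / real n) ^ n"
proof -
  define d where "d m = fact m / fact n - real n ^ m / real n ^ n" for m
  have d0: "0 \<le> d m" if "m \<le> n" for m
    using real_pow_mult_fact_le[OF that] n by (simp add: d_def divide_simps mult.commute)
  have "char_sum a n z / fact n
          - (\<Sum>m\<le>n. z ^ (n - m) * of_nat n ^ m * coeff (node_poly a n) m) / of_nat n ^ n
        = (\<Sum>m\<le>n. z ^ (n - m) * coeff (node_poly a n) m * complex_of_real (d m))"
    unfolding char_sum_eq d_def sum_divide_distrib sum_subtractf[symmetric]
    by (intro sum.cong refl) (simp add: algebra_simps diff_divide_distrib)
  also have "norm \<dots> \<le> (\<Sum>m\<le>n. R ^ (n - m) * real (n choose m) * d m)"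
  proof (rule order_trans[OF norm_sum sum_mono])
    fix m assume m: "m \<in> {..n}"
    obtain r where r: "coeff (node_poly a n) m = complex_of_real r" "0 \<le> r" "r \<le> real (n choose m)"
      using node_poly_coeff_bounds(3)[OF mesh] by blast
    have "norm (z ^ (n - m) * coeff (node_poly a n) m * complex_of_real (d m)) = norm z ^ (n - m) * r * d m"
      using r d0[of m] m by (simp add: norm_mult norm_power)
    also have "\<dots> \<le> R ^ (n - m) * real (n choose m) * d m"
      using r d0[of m] m z order_trans[OF norm_ge_zero z] by (intro mult_mono power_mono) auto
    finally show "norm (z ^ (n - m) * coeff (node_poly a n) m * complex_of_real (d m))
                    \<le> R ^ (n - m) * real (n choose m) * d m" .
  qed
  also have "\<dots> = (\<Sum>j\<le>n. R ^ j / fact j) - (1 + R / real n) ^ n"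
    unfolding d_def right_diff_distrib sum_subtractf sum_binomial_fact_ratio sum_binomial_pow_ratio[OF n]
    by simp
  finally show ?thesis .
qed

lemma char_sum_lower_bound:
  assumes mesh: "is_mesh a n" and z: "z \<noteq> 0" "norm z \<le> R" and nR: "R < real n"
  shows "(1 - R / real n) ^ n - ((\<Sum>j\<le>n. R ^ j / fact j) - (1 + R / real n) ^ n)
           \<le> norm (char_sum a n z) / fact n"
proof -
  define W where "W = (\<Sum>m\<le>n. z ^ (n - m) * of_nat n ^ m * coeff (node_poly a n) m)"
  have n: "n \<ge> 1" using z nR norm_ge_zero[of z] by (cases n) auto
  have "(1 - R / real n) ^ n = (real n - R) ^ n / real n ^ n"
    using n by (simp add: power_divide[symmetric] diff_divide_distrib)
  also have "\<dots> \<le> norm (W / of_nat n ^ n)"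
    using norm_prod_node_lower[OF mesh z(2) nR] unfolding W_def node_poly_homogeneous[OF mesh z(1)]
    by (simp add: norm_divide norm_power divide_right_mono)
  finally have "(1 - R / real n) ^ n \<le> norm (W / of_nat n ^ n)" .
  moreover have "norm (W / of_nat n ^ n) \<le> norm (char_sum a n z / fact n)
                   + norm (char_sum a n z / fact n - W / of_nat n ^ n)"
    using norm_triangle_sub[of "W / of_nat n ^ n" "char_sum a n z / fact n"]
    by (simp add: norm_minus_commute)
  ultimately show ?thesis
    using norm_char_sum_minus_homogeneous_le[OF mesh z(2) n] unfolding W_def
    by (simp add: norm_divide)
qed

section \<open>Bounded linear functionals on X\<close>

lemma abs_le_supnorm:
  assumes "f \<in> Xspace" "t \<in> {-1..0}" shows "\<bar>f t\<bar> \<le> supnorm f"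
proof -
  have "continuous_on {-1..0} (\<lambda>t. \<bar>f t\<bar>)"
    using assms(1) unfolding Xspace_def by (auto intro: continuous_intros)
  then have "bdd_above ((\<lambda>t. \<bar>f t\<bar>) ` {-1..0})"
    by (intro bounded_imp_bdd_above compact_imp_bounded compact_continuous_image) auto
  then show ?thesis unfolding supnorm_def using assms(2) by (rule cSUP_upper2) simp
qed

lemma supnorm_nonneg:
  assumes "f \<in> Xspace" shows "0 \<le> supnorm f"
proof -
  have "\<bar>f 0\<bar> \<le> supnorm f" by (rule abs_le_supnorm[OF assms]) simp
  then show ?thesis using abs_ge_zero[of "f 0"] by linarith
qed

lemma supnorm_le: "\<forall>t\<in>{-1..0}. \<bar>f t\<bar> \<le> B \<Longrightarrow> supnorm f \<le> B"
  unfolding supnorm_def by (intro cSUP_least) auto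

lemma bl_functional_add:
  "bl_functional \<Phi> \<Longrightarrow> f \<in> Xspace \<Longrightarrow> g \<in> Xspace \<Longrightarrow> \<Phi> (\<lambda>t. f t + g t) = \<Phi> f + \<Phi> g"
  unfolding bl_functional_def by blast

lemma bl_functional_scale:
  "bl_functional \<Phi> \<Longrightarrow> f \<in> Xspace \<Longrightarrow> \<Phi> (\<lambda>t. c * f t) = c * \<Phi> f"
  unfolding bl_functional_def by blast

lemma bl_functional_cong:
  "bl_functional \<Phi> \<Longrightarrow> f \<in> Xspace \<Longrightarrow> g \<in> Xspace \<Longrightarrow> \<forall>t\<in>{-1..0}. f t = g t \<Longrightarrow> \<Phi> f = \<Phi> g"
  unfolding bl_functional_def by blast

lemma bl_functional_bounded:
  assumes "bl_functional \<Phi>" obtains M where "0 \<le> M" "\<forall>f\<in>Xspace. \<bar>\<Phi> f\<bar> \<le> M * supnorm f"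
proof -
  obtain M where M: "\<forall>f\<in>Xspace. \<bar>\<Phi> f\<bar> \<le> M * supnorm f"
    using assms unfolding bl_functional_def by blast
  have "\<bar>\<Phi> f\<bar> \<le> \<bar>M\<bar> * supnorm f" if f: "f \<in> Xspace" for f
  proof -
    have "M * supnorm f \<le> \<bar>M\<bar> * supnorm f"
      by (rule mult_right_mono) (simp_all add: supnorm_nonneg[OF f])
    then show ?thesis using M f by fastforce
  qed
  then show thesis by (intro that[of "\<bar>M\<bar>"]) auto
qed

lemma bl_functional_le_fnorm:
  assumes bl: "bl_functional \<Phi>" and f: "f \<in> Xspace"
  shows "\<bar>\<Phi> f\<bar> \<le> fnorm \<Phi> * supnorm f"
proof (cases "supnorm f = 0")
  case True
  have z: "(\<lambda>t::real. 0::real) \<in> Xspace" by (simp add: Xspace_def)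
  moreover have "\<forall>t\<in>{-1..0}. f t = 0" using abs_le_supnorm[OF f] True by fastforce
  ultimately have "\<Phi> f = \<Phi> (\<lambda>t. 0 * 0)" using bl_functional_cong[OF bl f] by simp
  also have "\<dots> = 0" using bl_functional_scale[OF bl z, of 0] by simp
  finally show ?thesis using True by simp
next
  case False
  define s where "s = supnorm f"
  have s: "0 < s" using False supnorm_nonneg[OF f] by (simp add: s_def)
  obtain M where M: "0 \<le> M" "\<forall>f\<in>Xspace. \<bar>\<Phi> f\<bar> \<le> M * supnorm f" by (rule bl_functional_bounded[OF bl])
  have bdd: "bdd_above ((\<lambda>f. \<bar>\<Phi> f\<bar>) ` {f\<in>Xspace. supnorm f \<le> 1})"
  proof (rule bdd_aboveI2)
    fix h assume h: "h \<in> {f\<in>Xspace. supnorm f \<le> 1}"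
    then have "\<bar>\<Phi> h\<bar> \<le> M * supnorm h" using M by blast
    also have "\<dots> \<le> M" using h M(1) by (simp add: mult_left_le)
    finally show "\<bar>\<Phi> h\<bar> \<le> M" .
  qed
  have "(\<lambda>t. (1 / s) * f t) \<in> {f\<in>Xspace. supnorm f \<le> 1}"
  proof -
    have "continuous_on {-1..0} (\<lambda>t. (1 / s) * f t)"
      using f unfolding Xspace_def by (intro continuous_on_mult_left) simp
    moreover have "\<bar>(1 / s) * f t\<bar> \<le> 1" if "t \<in> {-1..0}" for t
      using abs_le_supnorm[OF f that] s by (simp add: abs_mult s_def)
    ultimately show ?thesis by (auto simp: Xspace_def intro: supnorm_le)
  qed
  then have "\<bar>\<Phi> (\<lambda>t. (1 / s) * f t)\<bar> \<le> fnorm \<Phi>"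
    unfolding fnorm_def using bdd by (rule cSUP_upper)
  then have "\<bar>\<Phi> f\<bar> / s \<le> fnorm \<Phi>"
    using bl_functional_scale[OF bl f, of "1 / s"] s by (simp add: abs_mult)
  then show ?thesis using s by (simp add: s_def divide_le_eq mult.commute)
qed

lemma bl_functional_diff_scale:
  assumes A: "bl_functional A" and B: "bl_functional B" and C: "bl_functional C"
  shows "bl_functional (\<lambda>f. A f - B f - c * C f)"
proof -
  obtain MA MB MC where MA: "\<forall>f\<in>Xspace. \<bar>A f\<bar> \<le> MA * supnorm f"
    and MB: "\<forall>f\<in>Xspace. \<bar>B f\<bar> \<le> MB * supnorm f" and MC: "\<forall>f\<in>Xspace. \<bar>C f\<bar> \<le> MC * supnorm f"
    using bl_functional_bounded[OF A] bl_functional_bounded[OF B] bl_functional_bounded[OF C] by metis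
  have "\<bar>A f - B f - c * C f\<bar> \<le> (MA + MB + \<bar>c\<bar> * MC) * supnorm f" if f: "f \<in> Xspace" for f
  proof -
    have "\<bar>A f - B f - c * C f\<bar> \<le> \<bar>A f\<bar> + \<bar>B f\<bar> + \<bar>c\<bar> * \<bar>C f\<bar>"
      by (simp add: abs_mult[symmetric])
    also have "\<dots> \<le> MA * supnorm f + MB * supnorm f + \<bar>c\<bar> * (MC * supnorm f)"
      using MA MB MC f by (intro add_mono mult_left_mono) auto
    finally show ?thesis by (simp add: algebra_simps)
  qed
  moreover have "A (\<lambda>t. f t + g t) - B (\<lambda>t. f t + g t) - c * C (\<lambda>t. f t + g t)
                  = A f - B f - c * C f + (A g - B g - c * C g)" if "f \<in> Xspace" "g \<in> Xspace" for f g
    using bl_functional_add[OF A that] bl_functional_add[OF B that] bl_functional_add[OF C that]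
    by (simp add: algebra_simps)
  moreover have "A (\<lambda>t. d * f t) - B (\<lambda>t. d * f t) - c * C (\<lambda>t. d * f t) = d * (A f - B f - c * C f)"
    if "f \<in> Xspace" for d f
    using bl_functional_scale[OF A that] bl_functional_scale[OF B that] bl_functional_scale[OF C that]
    by (simp add: algebra_simps)
  moreover have "A f - B f - c * C f = A g - B g - c * C g"
    if "f \<in> Xspace" "g \<in> Xspace" "\<forall>t\<in>{-1..0}. f t = g t" for f g
    using bl_functional_cong[OF A that] bl_functional_cong[OF B that] bl_functional_cong[OF C that]
    by simp
  ultimately show ?thesis unfolding bl_functional_def by blast
qed

lemma Ck_family_locally_bounded:
  assumes L: "Ck_family k L" and k: "0 < k"
  shows "\<exists>d>0. \<exists>M\<ge>0. \<forall>\<beta>. \<bar>\<beta> - \<alpha>\<bar> < d \<longrightarrow> (\<forall>f\<in>Xspace. \<bar>L \<beta> f\<bar> \<le> M * supnorm f)"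
proof -
  obtain Ls where Ls0: "Ls 0 = L" and bl: "\<forall>j\<le>k. \<forall>\<alpha>. bl_functional (Ls j \<alpha>)"
    and der: "\<forall>j<k. \<forall>\<alpha>. ((\<lambda>\<beta>. fnorm (\<lambda>f. Ls j \<beta> f - Ls j \<alpha> f - (\<beta> - \<alpha>) * Ls (Suc j) \<alpha> f)
                              / \<bar>\<beta> - \<alpha>\<bar>) \<longlongrightarrow> 0) (at \<alpha>)"
    using L unfolding Ck_family_def by blast
  define L' where "L' = Ls (Suc 0) \<alpha>"
  define D where "D = (\<lambda>\<beta> f. L \<beta> f - L \<alpha> f - (\<beta> - \<alpha>) * L' f)"
  have blL: "bl_functional (L \<beta>)" for \<beta> using bl Ls0 by auto
  have blL': "bl_functional L'" using bl k by (simp add: L'_def Suc_le_eq)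
  have "((\<lambda>\<beta>. fnorm (D \<beta>) / \<bar>\<beta> - \<alpha>\<bar>) \<longlongrightarrow> 0) (at \<alpha>)"
    unfolding D_def L'_def using der k Ls0 by auto
  then have "eventually (\<lambda>\<beta>. fnorm (D \<beta>) / \<bar>\<beta> - \<alpha>\<bar> < 1) (at \<alpha>)"
    by (rule order_tendstoD(2)) simp
  then obtain d where d: "d > 0"
    and dD: "\<And>\<beta>. \<beta> \<noteq> \<alpha> \<Longrightarrow> dist \<beta> \<alpha> < d \<Longrightarrow> fnorm (D \<beta>) / \<bar>\<beta> - \<alpha>\<bar> < 1"
    unfolding eventually_at by blast
  obtain Ma where Ma: "0 \<le> Ma" "\<forall>f\<in>Xspace. \<bar>L \<alpha> f\<bar> \<le> Ma * supnorm f"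
    using bl_functional_bounded[OF blL] .
  obtain M1 where M1: "0 \<le> M1" "\<forall>f\<in>Xspace. \<bar>L' f\<bar> \<le> M1 * supnorm f"
    using bl_functional_bounded[OF blL'] .
  have "\<bar>L \<beta> f\<bar> \<le> (Ma + M1 + 1) * supnorm f" if b: "\<bar>\<beta> - \<alpha>\<bar> < min d 1" and f: "f \<in> Xspace" for \<beta> f
  proof -
    have s: "0 \<le> supnorm f" by (rule supnorm_nonneg[OF f])
    have Df: "\<bar>D \<beta> f\<bar> \<le> 1 * supnorm f"
    proof (cases "\<beta> = \<alpha>")
      case True
      then show ?thesis using s by (simp add: D_def)
    next
      case False
      have "fnorm (D \<beta>) / \<bar>\<beta> - \<alpha>\<bar> < 1" using dD[OF False] b by (simp add: dist_real_def)
      then have "fnorm (D \<beta>) \<le> 1" using False b by (simp add: divide_less_eq)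
      moreover have "bl_functional (D \<beta>)"
        unfolding D_def by (rule bl_functional_diff_scale[OF blL blL blL'])
      ultimately show ?thesis
        using bl_functional_le_fnorm[OF _ f, of "D \<beta>"] mult_right_mono[OF _ s, of "fnorm (D \<beta>)" 1]
        by linarith
    qed
    have "\<bar>L \<beta> f\<bar> \<le> \<bar>L \<alpha> f\<bar> + \<bar>\<beta> - \<alpha>\<bar> * \<bar>L' f\<bar> + \<bar>D \<beta> f\<bar>"
      unfolding D_def by (simp add: abs_mult[symmetric])
    also have "\<dots> \<le> Ma * supnorm f + 1 * (M1 * supnorm f) + 1 * supnorm f"
      using Ma M1 f b Df by (intro add_mono mult_mono) auto
    finally show ?thesis by (simp add: algebra_simps)
  qed
  moreover have "0 < min d 1" "0 \<le> Ma + M1 + 1" using d Ma M1 by auto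
  ultimately show ?thesis by blast
qed

lemma Ck_family_bounded_on_compact:
  assumes L: "Ck_family k L" and k: "0 < k" and K: "compact K"
  obtains M where "0 \<le> M" "\<forall>\<beta>\<in>K. \<forall>f\<in>Xspace. \<bar>L \<beta> f\<bar> \<le> M * supnorm f"
proof -
  have "\<forall>\<alpha>. \<exists>d M. d > 0 \<and> M \<ge> 0 \<and> (\<forall>\<beta>. \<bar>\<beta> - \<alpha>\<bar> < d \<longrightarrow> (\<forall>f\<in>Xspace. \<bar>L \<beta> f\<bar> \<le> M * supnorm f))"
    using Ck_family_locally_bounded[OF L k] by blast
  then obtain d M where dM: "\<And>\<alpha>. d \<alpha> > 0" "\<And>\<alpha>. M \<alpha> \<ge> 0"
      "\<And>\<alpha> \<beta> f. \<bar>\<beta> - \<alpha>\<bar> < d \<alpha> \<Longrightarrow> f \<in> Xspace \<Longrightarrow> \<bar>L \<beta> f\<bar> \<le> M \<alpha> * supnorm f"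
    by metis
  have "K \<subseteq> (\<Union>\<alpha>\<in>K. ball \<alpha> (d \<alpha>))" using dM(1) by force
  then obtain F where F: "F \<subseteq> K" "finite F" "K \<subseteq> (\<Union>\<alpha>\<in>F. ball \<alpha> (d \<alpha>))"
    using compactE_image[OF K, of K "\<lambda>\<alpha>. ball \<alpha> (d \<alpha>)"] by blast
  have "\<bar>L \<beta> f\<bar> \<le> sum M F * supnorm f" if \<beta>: "\<beta> \<in> K" and f: "f \<in> Xspace" for \<beta> f
  proof -
    obtain \<alpha> where \<alpha>: "\<alpha> \<in> F" "\<beta> \<in> ball \<alpha> (d \<alpha>)" using F(3) \<beta> by blast
    then have "\<bar>L \<beta> f\<bar> \<le> M \<alpha> * supnorm f"
      using dM(3) f by (simp add: dist_real_def abs_minus_commute)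
    also have "\<dots> \<le> sum M F * supnorm f"
      using \<alpha>(1) F(2) dM(2) supnorm_nonneg[OF f] by (intro mult_right_mono member_le_sum) auto
    finally show ?thesis .
  qed
  moreover have "0 \<le> sum M F" using dM(2) by (simp add: sum_nonneg)
  ultimately show thesis using that by blast
qed

lemma cext_diff_le:
  assumes bl: "bl_functional \<Phi>" and M: "\<forall>f\<in>Xspace. \<bar>\<Phi> f\<bar> \<le> M * supnorm f"
    and g: "continuous_on {-1..0} g" and h: "continuous_on {-1..0} h"
    and B: "\<forall>t\<in>{-1..0}. norm (g t - h t) \<le> B" and M0: "0 \<le> M"
  shows "norm (cext \<Phi> g - cext \<Phi> h) \<le> 2 * M * B"
proof -
  have part: "\<bar>\<Phi> (\<lambda>t. P (g t)) - \<Phi> (\<lambda>t. P (h t))\<bar> \<le> M * B"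
    if P: "bounded_linear P" "\<And>w. \<bar>P w\<bar> \<le> norm w" for P :: "complex \<Rightarrow> real"
  proof -
    have cP: "continuous_on UNIV P" by (rule linear_continuous_on[OF P(1)])
    have X: "(\<lambda>t. P (g t)) \<in> Xspace" "(\<lambda>t. P (h t)) \<in> Xspace" "(\<lambda>t. P (g t) - P (h t)) \<in> Xspace"
      unfolding Xspace_def using g h
      by (auto intro!: continuous_intros continuous_on_compose2[OF cP])
    have "\<Phi> (\<lambda>t. P (g t)) = \<Phi> (\<lambda>t. (P (g t) - P (h t)) + P (h t))" by simp
    then have "\<Phi> (\<lambda>t. P (g t)) - \<Phi> (\<lambda>t. P (h t)) = \<Phi> (\<lambda>t. P (g t) - P (h t))"
      using bl_functional_add[OF bl X(3,2)] by simp
    moreover have "supnorm (\<lambda>t. P (g t) - P (h t)) \<le> B"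
      using B P by (intro supnorm_le) (metis linear_diff bounded_linear.linear order_trans)
    ultimately show ?thesis using M X(3) M0 by (metis mult_left_mono order_trans)
  qed
  have "cext \<Phi> g - cext \<Phi> h = complex_of_real (\<Phi> (\<lambda>t. Re (g t)) - \<Phi> (\<lambda>t. Re (h t)))
        + \<i> * complex_of_real (\<Phi> (\<lambda>t. Im (g t)) - \<Phi> (\<lambda>t. Im (h t)))"
    unfolding cext_def by (simp add: algebra_simps)
  also have "norm \<dots> \<le> \<bar>\<Phi> (\<lambda>t. Re (g t)) - \<Phi> (\<lambda>t. Re (h t))\<bar> + \<bar>\<Phi> (\<lambda>t. Im (g t)) - \<Phi> (\<lambda>t. Im (h t))\<bar>"
    by (rule order_trans[OF norm_triangle_ineq]) (simp add: norm_mult del: of_real_diff)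
  also have "\<dots> \<le> 2 * M * B"
    using part[OF bounded_linear_Re abs_Re_le_cmod] part[OF bounded_linear_Im abs_Im_le_cmod] by simp
  finally show ?thesis .
qed

lemma Ck_family_bl_functional: "Ck_family k L \<Longrightarrow> bl_functional (L \<alpha>)"
  unfolding Ck_family_def by (metis le0)

lemma continuous_on_pin: "continuous_on S (pin th n z)"
  unfolding pin_def lagr_eq_poly by (intro continuous_intros)

lemma norm_Delta0_minus_Deltan_le:
  assumes "bl_functional (L \<alpha>)" "0 \<le> M" "\<forall>f\<in>Xspace. \<bar>L \<alpha> f\<bar> \<le> M * supnorm f"
    and "\<forall>t\<in>{-1..0}. norm (pin th n z t - expf z t) \<le> B"
  shows "cmod (Delta0 L z \<alpha> - Deltan th L n z \<alpha>) \<le> 2 * M * B"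
proof -
  have "continuous_on {-1..0} (expf z)" unfolding expf_def by (intro continuous_intros)
  then have "norm (cext (L \<alpha>) (pin th n z) - cext (L \<alpha>) (expf z)) \<le> 2 * M * B"
    using assms continuous_on_pin by (intro cext_diff_le) auto
  then show ?thesis by (simp add: Delta0_def Deltan_def)
qed

section \<open>Asymptotics\<close>

lemma pow_div_fact_le_exp:
  assumes "0 \<le> (x::real)" shows "x ^ n / fact n \<le> exp x"
proof -
  have s: "(\<lambda>n. x ^ n / fact n) sums exp x"
    using exp_converges[of x] by (simp add: divide_inverse_commute)
  have "x ^ n / fact n = (\<Sum>i\<in>{n}. x ^ i / fact i)" by simp
  also have "\<dots> \<le> exp x"
    using sum_le_suminf[OF sums_summable[OF s], of "{n}"] assms sums_unique[OF s] by simp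
  finally show ?thesis .
qed

lemma exp_partial_sums_tendsto: "(\<lambda>n. \<Sum>j\<le>n. R ^ j / fact j) \<longlonglongrightarrow> exp (R::real)"
proof -
  have "(\<lambda>n. \<Sum>j<n. R ^ j / fact j) \<longlonglongrightarrow> exp R"
    using exp_converges[of R] by (simp add: sums_def divide_inverse_commute)
  then have "(\<lambda>n. \<Sum>j<Suc n. R ^ j / fact j) \<longlonglongrightarrow> exp R" by (rule LIMSEQ_Suc)
  then show ?thesis by (simp add: lessThan_Suc_atMost)
qed

text \<open>The lower bound in char_sum_lower_bound tends to exp (- R), as (1 \<plusminus> R/n)^n \<rightarrow> exp (\<plusminus> R).\<close>
lemma char_sum_eventually_large:
  assumes mesh: "\<forall>n. is_mesh (th n) n"
  shows "\<forall>\<^sub>F n in sequentially. \<forall>z. z \<noteq> 0 \<and> norm z \<le> R \<longrightarrow>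
           exp (- R) / 2 * fact n \<le> norm (char_sum (th n) n z)"
proof -
  let ?E = "\<lambda>n. \<Sum>j\<le>n. R ^ j / fact j"
  have "(\<lambda>n. (1 - R / real n) ^ n - (?E n - (1 + R / real n) ^ n)) \<longlonglongrightarrow> exp (- R) - (exp R - exp R)"
    using tendsto_exp_limit_sequentially[of "- R"] tendsto_exp_limit_sequentially[of R]
    by (intro tendsto_intros exp_partial_sums_tendsto) simp_all
  then have "\<forall>\<^sub>F n in sequentially. exp (- R) / 2 < (1 - R / real n) ^ n - (?E n - (1 + R / real n) ^ n)"
    by (rule order_tendstoD) simp
  moreover have "\<forall>\<^sub>F n in sequentially. R < real n" by real_asymp
  ultimately show ?thesis
  proof eventually_elim
    case (elim n)
    show ?case
    proof (intro allI impI)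
      fix z :: complex assume z: "z \<noteq> 0 \<and> norm z \<le> R"
      have "exp (- R) / 2 \<le> norm (char_sum (th n) n z) / fact n"
        using char_sum_lower_bound[OF mesh[rule_format] _ _ elim(2), of z] z elim(1) by linarith
      then show "exp (- R) / 2 * fact n \<le> norm (char_sum (th n) n z)" by (simp add: divide_simps)
    qed
  qed
qed

lemma pin_error_le:
  assumes mesh: "is_mesh (th n) n" and z: "norm z \<le> R" and \<delta>: "0 < \<delta>"
    and T: "z \<noteq> 0 \<Longrightarrow> \<delta> * fact n \<le> norm (char_sum (th n) n z)"
  shows "mat_invertible n (shifted th n z)"
    and "\<forall>t\<in>{-1..0}. norm (pin th n z t - expf z t) \<le> exp (2 * R) * R ^ Suc n / (\<delta> * fact n)"
proof -
  have "0 < \<delta> * fact n" using \<delta> by simp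
  then have zT: "z = 0 \<or> char_sum (th n) n z \<noteq> 0" using T by force
  note shifted = shifted_invertible_and_pin[where th=th and n=n, OF mesh zT]
  show "mat_invertible n (shifted th n z)" by (rule shifted(1))
  define c where "c = (if z = 0 then 0 else - (z ^ Suc n) / char_sum (th n) n z)"
  have c: "norm c \<le> R ^ Suc n / (\<delta> * fact n)"
  proof (cases "z = 0")
    case False
    then have "norm c = norm z ^ Suc n / norm (char_sum (th n) n z)"
      by (simp add: c_def norm_divide norm_power norm_mult)
    also have "\<dots> \<le> R ^ Suc n / (\<delta> * fact n)"
      using T[OF False] \<delta> z order_trans[OF norm_ge_zero z] by (intro frac_le power_mono) auto
    finally show ?thesis .
  qed (use z \<delta> in \<open>simp add: c_def\<close>)
  show "\<forall>t\<in>{-1..0}. norm (pin th n z t - expf z t) \<le> exp (2 * R) * R ^ Suc n / (\<delta> * fact n)"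
  proof
    fix t :: real assume t: "t \<in> {-1..0}"
    have "norm (exp (z * complex_of_real t) - poly (collocation_poly (th n) n z) (complex_of_real t))
            \<le> exp (2 * norm z) * norm c"
      using collocation_poly[OF mesh zT] norm_poly_node_poly_le_1[OF mesh] t unfolding c_def
      by (intro norm_exp_minus_poly_le) auto
    also have "\<dots> \<le> exp (2 * R) * (R ^ Suc n / (\<delta> * fact n))"
      using z c by (intro mult_mono) auto
    finally show "norm (pin th n z t - expf z t) \<le> exp (2 * R) * R ^ Suc n / (\<delta> * fact n)"
      by (simp add: shifted(2) expf_def norm_minus_commute)
  qed
qed

lemma collocation_error_eventually:
  assumes mesh: "\<forall>n. is_mesh (th n) n" and R: "0 \<le> R"
  obtains K where "0 \<le> K" "\<forall>\<^sub>F n in sequentially. \<forall>z. norm z \<le> R \<longrightarrow>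
     mat_invertible n (shifted th n z) \<and> (\<forall>t\<in>{-1..0}. norm (pin th n z t - expf z t) \<le> K * R ^ n / fact n)"
proof
  define \<delta> where "\<delta> = exp (- R) / 2"
  show "0 \<le> exp (2 * R) * R / \<delta>" using R by (simp add: \<delta>_def)
  show "\<forall>\<^sub>F n in sequentially. \<forall>z. norm z \<le> R \<longrightarrow> mat_invertible n (shifted th n z) \<and>
          (\<forall>t\<in>{-1..0}. norm (pin th n z t - expf z t) \<le> exp (2 * R) * R / \<delta> * R ^ n / fact n)"
    using char_sum_eventually_large[OF mesh, of R]
  proof eventually_elim
    case (elim n)
    show ?case
    proof (intro allI impI conjI ballI)
      fix z :: complex and t :: real assume z: "norm z \<le> R"
      have T: "z \<noteq> 0 \<Longrightarrow> \<delta> * fact n \<le> norm (char_sum (th n) n z)"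
        using elim z unfolding \<delta>_def by auto
      have \<delta>: "0 < \<delta>" by (simp add: \<delta>_def)
      show "mat_invertible n (shifted th n z)"
        by (rule pin_error_le(1)[where th=th and n=n, OF mesh[rule_format] z \<delta> T])
      assume "t \<in> {-1..0}"
      then have "norm (pin th n z t - expf z t) \<le> exp (2 * R) * R ^ Suc n / (\<delta> * fact n)"
        using pin_error_le(2)[where th=th and n=n, OF mesh[rule_format] z \<delta> T] by blast
      also have "\<dots> = exp (2 * R) * R / \<delta> * R ^ n / fact n" by simp
      finally show "norm (pin th n z t - expf z t) \<le> exp (2 * R) * R / \<delta> * R ^ n / fact n" .
    qed
  qed
qed

lemma fact_decay_eventually:
  assumes "0 \<le> K" "0 < R"
  shows "\<forall>\<^sub>F n in sequentially. K * R ^ n / fact n < 1 / sqrt (real n) * (2 * exp 1 * R / real n) ^ n"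
proof -
  have "filterlim (\<lambda>n::nat. 2 ^ n / sqrt (real n)) at_top sequentially" by real_asymp
  then have "\<forall>\<^sub>F n in sequentially. K < 2 ^ n / sqrt (real n)" by (simp add: filterlim_at_top_dense)
  moreover have "\<forall>\<^sub>F n in sequentially. 0 < n" by (simp add: eventually_gt_at_top)
  ultimately show ?thesis
  proof eventually_elim
    case (elim n)
    have "real n ^ n / fact n \<le> exp 1 ^ n"
      using pow_div_fact_le_exp[of "real n" n] by (simp add: exp_of_nat_mult[symmetric])
    then have "R ^ n / fact n \<le> (exp 1 * R) ^ n / real n ^ n"
      using elim(2) assms(2) by (simp add: field_simps power_mult_distrib)
    then have "K * (R ^ n / fact n) \<le> K * ((exp 1 * R) ^ n / real n ^ n)"
      using assms(1) by (rule mult_left_mono)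
    then have "K * R ^ n / fact n \<le> K * ((exp 1 * R) ^ n / real n ^ n)" by simp
    also have "\<dots> < 2 ^ n / sqrt (real n) * ((exp 1 * R) ^ n / real n ^ n)"
      using elim assms(2) by (intro mult_strict_right_mono) auto
    also have "\<dots> = 1 / sqrt (real n) * (2 * exp 1 * R / real n) ^ n"
      by (simp add: power_divide power_mult_distrib)
    finally show ?case .
  qed
qed

lemma compact_fst_norm_bounded:
  assumes "compact (U :: ('a::real_normed_vector \<times> 'b::real_normed_vector) set)"
  obtains R where "0 < R" "\<forall>(z, \<alpha>)\<in>U. norm z \<le> R"
proof -
  obtain a where "\<forall>x\<in>U. norm x \<le> a" using compact_imp_bounded[OF assms] unfolding bounded_iff by blast
  then have "norm z \<le> max a 1" if "(z, \<alpha>) \<in> U" for z \<alpha>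
    using that norm_fst_le[of z \<alpha>] by fastforce
  then show thesis by (intro that[of "max a 1"]) auto
qed

lemma Delta_difference_eventually:
  assumes mesh: "\<forall>n. is_mesh (th n) n" and L: "Ck_family k L" "0 < k"
    and A: "compact A" and R: "0 < R"
  shows "\<forall>\<^sub>F n in sequentially. \<forall>z \<alpha>. norm z \<le> R \<and> \<alpha> \<in> A \<longrightarrow>
           mat_invertible n (shifted th n z) \<and>
           cmod (Delta0 L z \<alpha> - Deltan th L n z \<alpha>) < 1 / sqrt (real n) * (2 * exp 1 * R / real n) ^ n"
proof -
  obtain M where M: "0 \<le> M" "\<forall>\<alpha>\<in>A. \<forall>f\<in>Xspace. \<bar>L \<alpha> f\<bar> \<le> M * supnorm f"
    by (rule Ck_family_bounded_on_compact[OF L A])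
  obtain K where K: "0 \<le> K" and err: "\<forall>\<^sub>F n in sequentially. \<forall>z. norm z \<le> R \<longrightarrow>
      mat_invertible n (shifted th n z) \<and> (\<forall>t\<in>{-1..0}. norm (pin th n z t - expf z t) \<le> K * R ^ n / fact n)"
    by (rule collocation_error_eventually[OF mesh less_imp_le[OF R]])
  have "0 \<le> 2 * M * K" using K M(1) by simp
  from err fact_decay_eventually[OF this R] show ?thesis
  proof eventually_elim
    case (elim n)
    show ?case
    proof (intro allI impI conjI)
      fix z :: complex and \<alpha> assume z\<alpha>: "norm z \<le> R \<and> \<alpha> \<in> A"
      then show "mat_invertible n (shifted th n z)" using elim(1) by blast
      have "cmod (Delta0 L z \<alpha> - Deltan th L n z \<alpha>) \<le> 2 * M * (K * R ^ n / fact n)"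
        using elim(1) z\<alpha> M by (intro norm_Delta0_minus_Deltan_le[OF Ck_family_bl_functional[OF L(1)]]) auto
      also have "\<dots> < 1 / sqrt (real n) * (2 * exp 1 * R / real n) ^ n" using elim(2) by simp
      finally show "cmod (Delta0 L z \<alpha> - Deltan th L n z \<alpha>) < 1 / sqrt (real n) * (2 * exp 1 * R / real n) ^ n" .
    qed
  qed
qed

theorem corollary5p2:
  fixes th :: "nat \<Rightarrow> nat \<Rightarrow> real"
    and L :: "real \<Rightarrow> (real \<Rightarrow> real) \<Rightarrow> real"
    and k :: nat
    and U :: "(complex \<times> real) set"
  assumes mesh: "\<forall>n. is_mesh (th n) n"
    and assmA: "(\<lambda>n. lebesgue_red th n / real n) \<longlonglongrightarrow> 0"
    and k: "k \<ge> 3"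
    and L: "Ck_family k L"
    and U: "compact U"
  shows "\<exists>C>0. \<forall>\<^sub>F n in sequentially. \<forall>(z, \<alpha>)\<in>U.
           mat_invertible n (shifted th n z) \<and>
           cmod (Delta0 L z \<alpha> - Deltan th L n z \<alpha>) < 1 / sqrt (real n) * (C / real n) ^ n"
proof -
  obtain R where R: "0 < R" "\<forall>(z, \<alpha>)\<in>U. norm z \<le> R" by (rule compact_fst_norm_bounded[OF U])
  have "0 < k" using k by simp
  moreover have "compact (snd ` U)"
    using U by (rule compact_continuous_image[OF continuous_on_snd[OF continuous_on_id]])
  ultimately have "\<forall>\<^sub>F n in sequentially. \<forall>z \<alpha>. norm z \<le> R \<and> \<alpha> \<in> snd ` U \<longrightarrow>
      mat_invertible n (shifted th n z) \<and>
      cmod (Delta0 L z \<alpha> - Deltan th L n z \<alpha>) < 1 / sqrt (real n) * (2 * exp 1 * R / real n) ^ n"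
    by (rule Delta_difference_eventually[OF mesh L _ _ R(1)])
  then have "\<forall>\<^sub>F n in sequentially. \<forall>(z, \<alpha>)\<in>U. mat_invertible n (shifted th n z) \<and>
      cmod (Delta0 L z \<alpha> - Deltan th L n z \<alpha>) < 1 / sqrt (real n) * (2 * exp 1 * R / real n) ^ n"
    by (rule eventually_mono) (use R(2) in force)
  then show ?thesis using R(1) by (intro exI[of _ "2 * exp 1 * R"]) auto
qed

end
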